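(* Let $G$ be a finitely generated, torsion-free, $2$-step nilpotent group with Malcev basis $(A;C)=(a_1,\dots,a_n;c_1,\dots,c_m)$, $n\ge2$, $m\ge1$, and let $\lambda_t^{ij}$, $\alpha_i$, $\gamma_t$, $c(x)$ and $M_\ell$ be as in the context. Suppose $\mathrm{rank}(M_\ell)=n-1$ for some $\ell\in\{1,\dots,n\}$. Then for $x\in G$, $[a_\ell,x]=1$ if and only if $x=a_\ell^{\alpha_\ell(x)}c(x)$. If, additionally, $\lambda_t^{\ell k}\neq0$ for some $t$ and some $k\neq\ell$, then $Z(G)=\langle C\rangle$ and $a_\ell$ is c-small.
   Context: Commutators: $[g,h]=g^{-1}h^{-1}gh$. A Malcev basis is a pair $(A;C)$ with $C$ a basis of a free abelian subgroup with $G'\le\langle C\rangle\le Z(G)$ and $A$ such that $G/\langle C\rangle$ is free abelian with basis $\{a_i\langle C\rangle\}$. Every $x\in G$ is then uniquely $x=\prod_{i=1}^n a_i^{\alpha_i(x)}c(x)$ with $c(x)=\prod_{j=1}^m c_j^{\gamma_j(x)}$, $\alpha_i(x),\gamma_j(x)\in\mathbb{Z}$. Define integers $\lambda_t^{ij}$ ($1\le i,j\le n$) by $[a_i,a_j]=\prod_{t=1}^m c_t^{\lambda_t^{ij}}$ (so $\lambda_t^{ij}=-\lambda_t^{ji}$, $\lambda_t^{ii}=0$). $M_\ell$ is the $m\times(n-1)$ integer matrix whose $t$-th row is $(-\lambda_t^{1\ell},\dots,-\lambda_t^{\ell-1,\ell},\lambda_t^{\ell,\ell+1},\dots,\lambda_t^{\ell,n})$;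 its rank is its maximal number of linearly independent rows. An element $g$ is c-small if its centralizer equals $\{g^tz\mid t\in\mathbb{Z},z\in Z(G)\}$. *)

theory Defs
  imports "HOL-Algebra.Algebra"
begin

definition comm :: "('g, 'b) monoid_scheme \<Rightarrow> 'g \<Rightarrow> 'g \<Rightarrow> 'g" where
  "comm G g h = inv\<^bsub>G\<^esub> g \<otimes>\<^bsub>G\<^esub> inv\<^bsub>G\<^esub> h \<otimes>\<^bsub>G\<^esub> g \<otimes>\<^bsub>G\<^esub> h"

definition grp_center :: "('g, 'b) monoid_scheme \<Rightarrow> 'g set" where
  "grp_center G = {z \<in> carrier G. \<forall>y \<in> carrier G. z \<otimes>\<^bsub>G\<^esub> y = y \<otimes>\<^bsub>G\<^esub> z}"

definition grp_centralizer :: "('g, 'b) monoid_scheme \<Rightarrow> 'g \<Rightarrow> 'g set" where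
  "grp_centralizer G g = {y \<in> carrier G. g \<otimes>\<^bsub>G\<^esub> y = y \<otimes>\<^bsub>G\<^esub> g}"

definition finitely_generated :: "('g, 'b) monoid_scheme \<Rightarrow> bool" where
  "finitely_generated G \<longleftrightarrow> (\<exists>S. finite S \<and> S \<subseteq> carrier G \<and> generate G S = carrier G)"

definition torsion_free :: "('g, 'b) monoid_scheme \<Rightarrow> bool" where
  "torsion_free G \<longleftrightarrow> (\<forall>x \<in> carrier G. \<forall>k::nat. k > 0 \<and> x [^]\<^bsub>G\<^esub> k = \<one>\<^bsub>G\<^esub> \<longrightarrow> x = \<one>\<^bsub>G\<^esub>)"

definition two_step_nilpotent :: "('g, 'b) monoid_scheme \<Rightarrow> bool" where
  "two_step_nilpotent G \<longleftrightarrow> derived G (carrier G) \<subseteq> grp_center G"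

definition c_small :: "('g, 'b) monoid_scheme \<Rightarrow> 'g \<Rightarrow> bool" where
  "c_small G g \<longleftrightarrow> grp_centralizer G g =
     {g [^]\<^bsub>G\<^esub> (t::int) \<otimes>\<^bsub>G\<^esub> z | t z. z \<in> grp_center G}"

definition oprod :: "('g, 'b) monoid_scheme \<Rightarrow> (nat \<Rightarrow> 'g) \<Rightarrow> nat \<Rightarrow> nat \<Rightarrow> 'g" where
  "oprod G f i j = foldr (\<lambda>k acc. f k \<otimes>\<^bsub>G\<^esub> acc) [i..<j] \<one>\<^bsub>G\<^esub>"

definition aprod :: "('g, 'b) monoid_scheme \<Rightarrow> (nat \<Rightarrow> 'g) \<Rightarrow> nat \<Rightarrow> (nat \<Rightarrow> int) \<Rightarrow> 'g" where
  "aprod G a n e = oprod G (\<lambda>i. a i [^]\<^bsub>G\<^esub> e i) 1 (n + 1)"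

text \<open>Malcev basis (A;C) = (a_1..a_n; c_1..c_m):
  C is a basis of a free abelian subgroup (the c_j commute, being central, and
  c_1^{g_1}...c_m^{g_m} = 1 only for g = 0 on 1..m), G' <= <C> <= Z(G), and
  G/<C> is free abelian with basis {a_i <C>}: every coset is uniquely
  (a_1<C>)^{e_1}...(a_n<C>)^{e_n}.\<close>
definition malcev_basis ::
  "('g, 'b) monoid_scheme \<Rightarrow> nat \<Rightarrow> nat \<Rightarrow> (nat \<Rightarrow> 'g) \<Rightarrow> (nat \<Rightarrow> 'g) \<Rightarrow> bool" where
  "malcev_basis G n m a c \<longleftrightarrow>
     (\<forall>i \<in> {1..n}. a i \<in> carrier G) \<and>
     (\<forall>j \<in> {1..m}. c j \<in> carrier G) \<and>
     (\<forall>g::nat \<Rightarrow> int. aprod G c m g = \<one>\<^bsub>G\<^esub> \<longrightarrow> (\<forall>j \<in> {1..m}. g j = 0)) \<and>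
     derived G (carrier G) \<subseteq> generate G (c ` {1..m}) \<and>
     generate G (c ` {1..m}) \<subseteq> grp_center G \<and>
     (\<forall>x \<in> carrier G. \<exists>e::nat \<Rightarrow> int. x \<in> aprod G a n e <#\<^bsub>G\<^esub> generate G (c ` {1..m})) \<and>
     (\<forall>e e'. aprod G a n e <#\<^bsub>G\<^esub> generate G (c ` {1..m}) =
             aprod G a n e' <#\<^bsub>G\<^esub> generate G (c ` {1..m})
           \<longrightarrow> (\<forall>i \<in> {1..n}. e i = e' i))"

definition alpha_coord ::
  "('g, 'b) monoid_scheme \<Rightarrow> nat \<Rightarrow> nat \<Rightarrow> (nat \<Rightarrow> 'g) \<Rightarrow> (nat \<Rightarrow> 'g) \<Rightarrow> 'g \<Rightarrow> nat \<Rightarrow> int" where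
  "alpha_coord G n m a c x i =
     (THE k. \<exists>e g. x = aprod G a n e \<otimes>\<^bsub>G\<^esub> aprod G c m g \<and> e i = k)"

definition gamma_coord ::
  "('g, 'b) monoid_scheme \<Rightarrow> nat \<Rightarrow> nat \<Rightarrow> (nat \<Rightarrow> 'g) \<Rightarrow> (nat \<Rightarrow> 'g) \<Rightarrow> 'g \<Rightarrow> nat \<Rightarrow> int" where
  "gamma_coord G n m a c x j =
     (THE k. \<exists>e g. x = aprod G a n e \<otimes>\<^bsub>G\<^esub> aprod G c m g \<and> g j = k)"

definition c_part ::
  "('g, 'b) monoid_scheme \<Rightarrow> nat \<Rightarrow> nat \<Rightarrow> (nat \<Rightarrow> 'g) \<Rightarrow> (nat \<Rightarrow> 'g) \<Rightarrow> 'g \<Rightarrow> 'g" where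
  "c_part G n m a c x = aprod G c m (gamma_coord G n m a c x)"

definition lam ::
  "('g, 'b) monoid_scheme \<Rightarrow> nat \<Rightarrow> nat \<Rightarrow> (nat \<Rightarrow> 'g) \<Rightarrow> (nat \<Rightarrow> 'g) \<Rightarrow> nat \<Rightarrow> nat \<Rightarrow> nat \<Rightarrow> int" where
  "lam G n m a c t i j = (THE k. \<exists>g. comm G (a i) (a j) = aprod G c m g \<and> g t = k)"

definition M_entry ::
  "('g, 'b) monoid_scheme \<Rightarrow> nat \<Rightarrow> nat \<Rightarrow> (nat \<Rightarrow> 'g) \<Rightarrow> (nat \<Rightarrow> 'g) \<Rightarrow> nat \<Rightarrow> nat \<Rightarrow> nat \<Rightarrow> int" where
  "M_entry G n m a c l t k =
     (if k < l then - lam G n m a c t k l else lam G n m a c t l (k + 1))"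

definition rows_indep :: "(nat \<Rightarrow> nat \<Rightarrow> int) \<Rightarrow> nat \<Rightarrow> nat set \<Rightarrow> bool" where
  "rows_indep M p S \<longleftrightarrow>
     (\<forall>q::nat \<Rightarrow> rat. (\<forall>k \<in> {1..p}. (\<Sum>t \<in> S. q t * of_int (M t k)) = 0)
        \<longrightarrow> (\<forall>t \<in> S. q t = 0))"

definition row_rank :: "(nat \<Rightarrow> nat \<Rightarrow> int) \<Rightarrow> nat \<Rightarrow> nat \<Rightarrow> nat" where
  "row_rank M m p = Max {card S | S. S \<subseteq> {1..m} \<and> rows_indep M p S}"

definition rank_M ::
  "('g, 'b) monoid_scheme \<Rightarrow> nat \<Rightarrow> nat \<Rightarrow> (nat \<Rightarrow> 'g) \<Rightarrow> (nat \<Rightarrow> 'g) \<Rightarrow> nat \<Rightarrow> nat" where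
  "rank_M G n m a c l = row_rank (M_entry G n m a c l) m (n - 1)"

end

theory Submission
  imports Defs "HOL-Library.Function_Algebras"
begin

text \<open>Write x = a_1^e_1 ... a_n^e_n c(x). In a group of class two, y \<mapsto> [a_l, y] is a
  homomorphism into <C>, so [a_l, x] = \<Prod>_t c_t^(\<Sum>_i e_i lambda_t^li), and since the c_t are
  independent, [a_l, x] = 1 says that (e_i)_(i \<noteq> l) lies in the kernel of M_l. As M_l has
  n - 1 columns and rank n - 1, that kernel is trivial: a nonzero kernel vector would be orthogonal
  to n - 1 independent rows and hence an n-th independent row of length n - 1.

  A central z is then a_l^alpha c(z), and [a_k, z] = 1 gives alpha lambda_t^kl = 0 for all t; a
  nonzero lambda_t^lk forces alpha = 0, so Z(G) = <C>, and the first part becomes exactly the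
  statement that a_l is c-small.\<close>

section \<open>Rank of integer matrices\<close>

interpretation rat_fun: vector_space "\<lambda>(r::rat) (f::nat \<Rightarrow> rat) k. r * f k"
  by unfold_locales (auto simp: fun_eq_iff algebra_simps)

lemma sum_fun_apply: "(\<Sum>a\<in>A. f a) x = (\<Sum>a\<in>A. f a x)"
  by (induction A rule: infinite_finite_induct) auto

lemma supported_in_span_deltas:
  assumes "\<forall>k. k \<notin> {1..p} \<longrightarrow> f k = 0"
  shows "f \<in> rat_fun.span ((\<lambda>i k. if k = i then 1 else 0) ` {1..p})"
proof -
  have "f = (\<Sum>i\<in>{1..p}. (\<lambda>k. f i * (if k = i then 1 else 0)))"
    using assms by (auto simp: fun_eq_iff sum_fun_apply if_distrib cong: if_cong)
  also have "\<dots> \<in> rat_fun.span ((\<lambda>i k. if k = i then 1 else 0) ` {1..p})"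
    by (intro rat_fun.span_sum rat_fun.span_scale rat_fun.span_base) auto
  finally show ?thesis .
qed

lemma rows_indep_card_le:
  assumes fin: "finite S" and ind: "rows_indep M p S"
  shows "card S \<le> p"
proof -
  define row where "row t k = (if k \<in> {1..p} then rat_of_int (M t k) else 0)" for t k
  have inj: "inj_on row S"
  proof (rule inj_onI, rule ccontr)
    fix s s' assume s: "s \<in> S" "s' \<in> S" "row s = row s'" "s \<noteq> s'"
    define q where "q t = (if t = s then 1 else if t = s' then -1 else (0::rat))" for t
    have "(\<Sum>t\<in>S. q t * of_int (M t k)) = 0" if "k \<in> {1..p}" for k
    proof -
      have "(\<Sum>t\<in>S. q t * of_int (M t k)) = (\<Sum>t\<in>{s, s'}. q t * of_int (M t k))"
        by (rule sum.mono_neutral_right) (use fin s in \<open>auto simp: q_def\<close>)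
      also have "\<dots> = row s k - row s' k" using s(4) that by (simp add: q_def row_def)
      finally show ?thesis using fun_cong[OF s(3), of k] that by (simp add: row_def)
    qed
    then have "q s = 0" using ind s unfolding rows_indep_def by blast
    then show False by (simp add: q_def)
  qed
  have indep: "rat_fun.independent (row ` S)"
  proof (rule rat_fun.independent_if_scalars_zero)
    fix cf u assume zero: "(\<Sum>v\<in>row ` S. (\<lambda>k. cf v * v k)) = 0" and u: "u \<in> row ` S"
    have "(\<Sum>t\<in>S. cf (row t) * of_int (M t k)) = 0" if "k \<in> {1..p}" for k
    proof -
      have "(\<Sum>t\<in>S. cf (row t) * of_int (M t k)) = (\<Sum>t\<in>S. cf (row t) * row t k)"
        using that by (simp add: row_def)
      also have "\<dots> = (\<Sum>v\<in>row ` S. cf v * v k)"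
        by (simp add: sum.reindex[OF inj])
      also have "\<dots> = 0"
        using fun_cong[OF zero, of k] by (simp only: sum_fun_apply zero_fun_apply)
      finally show ?thesis .
    qed
    then show "cf u = 0"
      using u spec[OF ind[unfolded rows_indep_def], of "\<lambda>t. cf (row t)"] by auto
  qed (use fin in auto)
  have span: "row ` S \<subseteq> rat_fun.span ((\<lambda>i k. if k = i then 1 else 0) ` {1..p})"
    by (rule image_subsetI, rule supported_in_span_deltas) (simp add: row_def)
  have "card (row ` S) \<le> card ((\<lambda>i k. if k = i then (1::rat) else 0) ` {1..p})"
    using rat_fun.independent_span_bound[OF _ indep span] by simp
  also have "\<dots> \<le> p" using card_image_le[of "{1..p}"] by simp
  finally show ?thesis using card_image[OF inj] by simp
qed

lemma rows_indep_insert_orthogonal: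
  assumes fin: "finite S" and new: "t0 \<notin> S" and ind: "rows_indep M p S"
    and orth: "\<forall>t\<in>S. (\<Sum>k\<in>{1..p}. M t k * M t0 k) = 0"
    and nonzero: "\<exists>k\<in>{1..p}. M t0 k \<noteq> 0"
  shows "rows_indep M p (insert t0 S)"
  unfolding rows_indep_def
proof (intro allI impI)
  fix q :: "nat \<Rightarrow> rat"
  assume comb: "\<forall>k\<in>{1..p}. (\<Sum>t\<in>insert t0 S. q t * of_int (M t k)) = 0"
  have "0 = (\<Sum>k\<in>{1..p}. (\<Sum>t\<in>insert t0 S. q t * of_int (M t k)) * of_int (M t0 k))"
    using comb by simp
  also have "\<dots> = q t0 * (\<Sum>k\<in>{1..p}. of_int (M t0 k ^ 2))
      + (\<Sum>t\<in>S. q t * of_int (\<Sum>k\<in>{1..p}. M t k * M t0 k))"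
    using fin new
    by (simp add: algebra_simps power2_eq_square sum.distrib sum_distrib_left sum_distrib_right
        sum.swap[of _ S])
  also have "\<dots> = q t0 * (\<Sum>k\<in>{1..p}. of_int (M t0 k ^ 2))"
    using orth by simp
  moreover have "(\<Sum>k\<in>{1..p}. of_int (M t0 k ^ 2)) > (0::rat)"
    using nonzero by (auto intro: sum_pos2)
  ultimately have "q t0 = 0" by simp
  moreover have "\<forall>t\<in>S. q t = 0"
    using ind comb fin new \<open>q t0 = 0\<close> unfolding rows_indep_def by auto
  ultimately show "\<forall>t\<in>insert t0 S. q t = 0" by simp
qed

lemma row_rank_attained:
  "\<exists>S. S \<subseteq> {1..m} \<and> rows_indep M p S \<and> card S = row_rank M m p"
proof -
  let ?R = "{card S |S. S \<subseteq> {1..m} \<and> rows_indep M p S}"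
  have "finite ?R" by (rule finite_subset[of _ "card ` Pow {1..m}"]) auto
  moreover have "card {} \<in> ?R" unfolding rows_indep_def by force
  ultimately have "Max ?R \<in> ?R" by (intro Max_in) auto
  then show ?thesis unfolding row_rank_def by auto
qed

text \<open>A nonzero kernel vector, being orthogonal to p independent rows, would be a further
  independent row of length p.\<close>

lemma full_row_rank_kernel_trivial:
  fixes \<beta> :: "nat \<Rightarrow> int"
  assumes rank: "row_rank M m p = p"
    and kernel: "\<forall>t\<in>{1..m}. (\<Sum>k\<in>{1..p}. M t k * \<beta> k) = 0"
  shows "\<forall>k\<in>{1..p}. \<beta> k = 0"
proof (rule ccontr)
  assume nonzero: "\<not> ?thesis"
  obtain S where S: "S \<subseteq> {1..m}" "rows_indep M p S" "card S = p"
    using row_rank_attained[of m M p] rank by auto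
  have fin: "finite S" using S(1) finite_subset by blast
  obtain t0 :: nat where t0: "t0 \<notin> S" using ex_new_if_finite[OF infinite_UNIV_nat fin] by blast
  have same_rows: "(M(t0 := \<beta>)) t = M t" if "t \<in> S" for t
    using t0 that by auto
  have "rows_indep (M(t0 := \<beta>)) p (insert t0 S)"
  proof (rule rows_indep_insert_orthogonal[OF fin t0])
    show "rows_indep (M(t0 := \<beta>)) p S"
      using S(2) unfolding rows_indep_def by (simp only: same_rows cong: sum.cong)
    show "\<forall>t\<in>S. (\<Sum>k\<in>{1..p}. (M(t0 := \<beta>)) t k * (M(t0 := \<beta>)) t0 k) = 0"
      using kernel S(1) t0 by (auto simp: same_rows)
  qed (use nonzero in simp)
  then have "card (insert t0 S) \<le> p" using fin by (intro rows_indep_card_le) auto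
  then show False using fin t0 S(3) by simp
qed


section \<open>Centres, commutators and ordered products\<close>

context group
begin

lemma grp_center_closed: "z \<in> grp_center G \<Longrightarrow> z \<in> carrier G"
  by (simp add: grp_center_def)

lemma grp_center_commute: "z \<in> grp_center G \<Longrightarrow> y \<in> carrier G \<Longrightarrow> z \<otimes> y = y \<otimes> z"
  by (simp add: grp_center_def)

lemma grp_center_subgroup: "subgroup (grp_center G) G"
proof
  fix z w assume z: "z \<in> grp_center G" and w: "w \<in> grp_center G"
  have zc: "z \<in> carrier G" and wc: "w \<in> carrier G"
    using z w grp_center_closed by auto
  have "z \<otimes> w \<otimes> y = y \<otimes> (z \<otimes> w)" if y: "y \<in> carrier G" for y
  proof -
    have "z \<otimes> w \<otimes> y = z \<otimes> (y \<otimes> w)"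
      using zc wc y grp_center_commute[OF w y] by (simp add: m_assoc)
    also have "\<dots> = z \<otimes> y \<otimes> w"
      using zc wc y by (simp add: m_assoc)
    also have "\<dots> = y \<otimes> (z \<otimes> w)"
      using zc wc y grp_center_commute[OF z y] by (simp add: m_assoc)
    finally show ?thesis .
  qed
  then show "z \<otimes> w \<in> grp_center G" using zc wc by (simp add: grp_center_def)
  have "inv z \<otimes> y = y \<otimes> inv z" if y: "y \<in> carrier G" for y
  proof -
    have "inv z \<otimes> y = inv (inv y \<otimes> z)" using zc y by (simp add: inv_mult_group)
    also have "\<dots> = inv (z \<otimes> inv y)" using grp_center_commute[OF z inv_closed[OF y]] by simp
    also have "\<dots> = y \<otimes> inv z" using zc y by (simp add: inv_mult_group)
    finally show ?thesis .
  qed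
  then show "inv z \<in> grp_center G" using zc by (simp add: grp_center_def)
qed (auto simp: grp_center_def)

lemma comm_closed [simp]: "g \<in> carrier G \<Longrightarrow> h \<in> carrier G \<Longrightarrow> comm G g h \<in> carrier G"
  by (simp add: comm_def)

lemma comm_in_derived:
  assumes "g \<in> carrier G" "h \<in> carrier G"
  shows "comm G g h \<in> derived G (carrier G)"
proof -
  have "inv g \<otimes> inv h \<otimes> inv (inv g) \<otimes> inv (inv h) \<in> derived G (carrier G)"
    unfolding derived_def by (rule generate.incl) (use assms in blast)
  then show ?thesis using assms by (simp add: comm_def)
qed

lemma comm_eq_one_iff:
  assumes g: "g \<in> carrier G" and h: "h \<in> carrier G"
  shows "comm G g h = \<one> \<longleftrightarrow> g \<otimes> h = h \<otimes> g"
proof -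
  have "comm G g h = inv (h \<otimes> g) \<otimes> (g \<otimes> h)"
    using g h by (simp add: comm_def inv_mult_group m_assoc)
  then show ?thesis using g h
    by (metis inv_closed inv_inv inv_equality m_closed r_inv)
qed

lemma comm_self [simp]: "g \<in> carrier G \<Longrightarrow> comm G g g = \<one>"
  using comm_eq_one_iff by simp

lemma comm_center_right: "g \<in> carrier G \<Longrightarrow> z \<in> grp_center G \<Longrightarrow> comm G g z = \<one>"
  using comm_eq_one_iff grp_center_commute grp_center_closed by metis

lemma comm_swap:
  assumes "g \<in> carrier G" "h \<in> carrier G"
  shows "comm G h g = inv (comm G g h)"
proof -
  have "comm G h g \<otimes> comm G g h = \<one>"
    using assms by (simp add: comm_def m_assoc[symmetric]) (simp add: m_assoc r_inv)
  then show ?thesis using assms by (simp add: inv_equality)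
qed

lemma aprod_0 [simp]: "aprod G a 0 e = \<one>"
  by (simp add: aprod_def oprod_def)

lemma aprod_Suc:
  assumes "\<forall>i\<in>{1..Suc n}. a i \<in> carrier G"
  shows "aprod G a (Suc n) e = aprod G a n e \<otimes> a (Suc n) [^] e (Suc n)"
proof -
  have split: "foldr (\<lambda>k acc. f k \<otimes> acc) xs y = foldr (\<lambda>k acc. f k \<otimes> acc) xs \<one> \<otimes> y
      \<and> foldr (\<lambda>k acc. f k \<otimes> acc) xs \<one> \<in> carrier G"
    if "\<forall>k\<in>set xs. f k \<in> carrier G" "y \<in> carrier G" for f xs y
    using that by (induction xs) (auto simp: m_assoc)
  have "aprod G a (Suc n) e
      = foldr (\<lambda>k acc. a k [^] e k \<otimes> acc) [1..<n + 1] (a (Suc n) [^] e (Suc n) \<otimes> \<one>)"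
    unfolding aprod_def oprod_def by simp
  also have "\<dots> = aprod G a n e \<otimes> a (Suc n) [^] e (Suc n)"
    unfolding aprod_def oprod_def by (subst split[THEN conjunct1]) (use assms in auto)
  finally show ?thesis .
qed

lemma aprod_closed: "\<forall>i\<in>{1..n}. a i \<in> carrier G \<Longrightarrow> aprod G a n e \<in> carrier G"
  by (induction n) (auto simp: aprod_Suc)

lemma aprod_cong: "\<forall>i\<in>{1..n}. e i = e' i \<Longrightarrow> aprod G a n e = aprod G a n e'"
  unfolding aprod_def oprod_def by (rule foldr_cong) auto

lemma aprod_single:
  assumes "\<forall>i\<in>{1..n}. a i \<in> carrier G"
  shows "aprod G a n (\<lambda>j. if j = i then k else 0) = (if i \<in> {1..n} then a i [^] k else \<one>)"
  using assms by (induction n) (auto simp: aprod_Suc)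

lemma aprod_zero: "\<forall>i\<in>{1..n}. a i \<in> carrier G \<Longrightarrow> aprod G a n (\<lambda>_. 0) = \<one>"
  by (induction n) (auto simp: aprod_Suc)

lemma aprod_central:
  "\<forall>j\<in>{1..k}. c j \<in> grp_center G \<Longrightarrow> aprod G c k f \<in> grp_center G"
  using subgroup_int_pow_closed[OF grp_center_subgroup] subgroup.m_closed[OF grp_center_subgroup]
    subgroup.one_closed[OF grp_center_subgroup]
  by (induction k) (auto simp: aprod_Suc grp_center_closed)

lemma aprod_add_central:
  assumes "\<forall>j\<in>{1..k}. c j \<in> grp_center G"
  shows "aprod G c k (\<lambda>j. f j + g j) = aprod G c k f \<otimes> aprod G c k g"
  using assms
proof (induction k)
  case (Suc k)
  let ?x = "c (Suc k)"
  have x: "?x \<in> carrier G" and F: "aprod G c k f \<in> carrier G"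
    and Z: "aprod G c k g \<in> grp_center G"
    using Suc.prems aprod_central[of k c] grp_center_closed by auto
  have "aprod G c (Suc k) (\<lambda>j. f j + g j)
      = aprod G c k f \<otimes> (aprod G c k g \<otimes> ?x [^] f (Suc k)) \<otimes> ?x [^] g (Suc k)"
    using Suc x F Z grp_center_closed by (simp add: aprod_Suc int_pow_mult m_assoc)
  also have "\<dots> = aprod G c (Suc k) f \<otimes> aprod G c (Suc k) g"
    using Suc.prems x F Z grp_center_closed grp_center_commute[OF Z, of "?x [^] f (Suc k)"]
    by (simp add: aprod_Suc m_assoc)
  finally show ?case .
qed simp

lemma aprod_int_pow_central:
  assumes "\<forall>j\<in>{1..k}. c j \<in> grp_center G"
  shows "aprod G c k (\<lambda>j. z * f j) = aprod G c k f [^] z"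
  using assms
proof (induction k)
  case (Suc k)
  have Z: "aprod G c k f \<in> grp_center G" and x: "c (Suc k) \<in> carrier G"
    using Suc.prems aprod_central[of k c f] grp_center_closed by auto
  have commute: "aprod G c k f \<otimes> c (Suc k) [^] f (Suc k) = c (Suc k) [^] f (Suc k) \<otimes> aprod G c k f"
    using grp_center_commute[OF Z] x by simp
  have car: "\<forall>i\<in>{1..Suc k}. c i \<in> carrier G"
    using Suc.prems grp_center_closed by blast
  have "aprod G c (Suc k) (\<lambda>j. z * f j)
      = aprod G c k f [^] z \<otimes> (c (Suc k) [^] f (Suc k)) [^] z"
    using Suc car x by (simp add: aprod_Suc int_pow_pow mult.commute)
  also have "\<dots> = (aprod G c k f \<otimes> c (Suc k) [^] f (Suc k)) [^] z"
    using commute x grp_center_closed[OF Z]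
    by (intro int_pow_mult_distrib[symmetric]) auto
  also have "\<dots> = aprod G c (Suc k) f [^] z"
    using car by (simp add: aprod_Suc)
  finally show ?case .
qed simp

lemma aprod_uminus_central:
  "\<forall>j\<in>{1..k}. c j \<in> grp_center G \<Longrightarrow> aprod G c k (\<lambda>j. - f j) = inv (aprod G c k f)"
  using aprod_int_pow_central[of k c "-1" f] aprod_central[of k c f] grp_center_closed
  by (simp add: int_pow_neg)

end

section \<open>Groups of nilpotency class two\<close>

locale class_two_group = group G for G (structure) +
  assumes derived_central: "derived G (carrier G) \<subseteq> grp_center G"
begin

lemma comm_central: "g \<in> carrier G \<Longrightarrow> h \<in> carrier G \<Longrightarrow> comm G g h \<in> grp_center G"
  using comm_in_derived derived_central by blast

lemma comm_mult_right:
  assumes g: "g \<in> carrier G" and x: "x \<in> carrier G" and y: "y \<in> carrier G"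
  shows "comm G g (x \<otimes> y) = comm G g x \<otimes> comm G g y"
proof -
  have conj: "inv x \<otimes> g \<otimes> x = g \<otimes> comm G g x"
    using g x by (simp add: comm_def m_assoc[symmetric] r_inv)
  have "comm G g (x \<otimes> y) = inv g \<otimes> inv y \<otimes> (inv x \<otimes> g \<otimes> x) \<otimes> y"
    using g x y by (simp add: comm_def inv_mult_group m_assoc)
  also have "\<dots> = inv g \<otimes> inv y \<otimes> g \<otimes> (comm G g x \<otimes> y)"
    using g x y by (simp add: conj m_assoc)
  also have "\<dots> = comm G g y \<otimes> comm G g x"
    using g x y grp_center_commute[OF comm_central[OF g x], of y] by (simp add: comm_def m_assoc)
  also have "\<dots> = comm G g x \<otimes> comm G g y"
    using g x y grp_center_commute[OF comm_central[OF g y], of "comm G g x"] by simp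
  finally show ?thesis .
qed

lemma comm_hom_right: "g \<in> carrier G \<Longrightarrow> comm G g \<in> hom G G"
  by (auto intro!: homI simp: comm_mult_right)

lemma comm_int_pow_right:
  "g \<in> carrier G \<Longrightarrow> x \<in> carrier G \<Longrightarrow> comm G g (x [^] (k::int)) = comm G g x [^] k"
  using hom_int_pow[OF comm_hom_right] is_group by blast

lemma comm_int_pow_mult_central:
  assumes "g \<in> carrier G" "x \<in> carrier G" "z \<in> grp_center G"
  shows "comm G g (x [^] (k::int) \<otimes> z) = comm G g x [^] k"
  using assms by (simp add: comm_mult_right comm_int_pow_right comm_center_right grp_center_closed)

lemma comm_self_pow_mult_central:
  "g \<in> carrier G \<Longrightarrow> z \<in> grp_center G \<Longrightarrow> comm G g (g [^] (k::int) \<otimes> z) = \<one>"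
  by (simp add: comm_int_pow_mult_central)

end

section \<open>Malcev coordinates\<close>

text \<open>Column k of M_l belongs to the generator a_(skip l k): the index l is left out.\<close>

definition skip :: "nat \<Rightarrow> nat \<Rightarrow> nat" where
  "skip l k = (if k < l then k else Suc k)"

lemma bij_betw_skip: "l \<in> {1..n} \<Longrightarrow> bij_betw (skip l) {1..n-1} ({1..n} - {l})"
proof (rule bij_betw_imageI)
  show "inj_on (skip l) {1..n-1}" by (rule inj_onI) (auto simp: skip_def split: if_splits)
  assume l: "l \<in> {1..n}"
  show "skip l ` {1..n-1} = {1..n} - {l}"
  proof (intro equalityI subsetI)
    fix i assume i: "i \<in> {1..n} - {l}"
    have "i = skip l (if i < l then i else i - 1) \<and> (if i < l then i else i - 1) \<in> {1..n-1}"
      using i l by (auto simp: skip_def)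
    then show "i \<in> skip l ` {1..n-1}" by blast
  qed (use l in \<open>auto simp: skip_def\<close>)
qed

locale malcev_group = class_two_group +
  fixes n m :: nat and a c :: "nat \<Rightarrow> 'a"
  assumes malcev: "malcev_basis G n m a c"
begin

abbreviation C_subgroup :: "'a set" where
  "C_subgroup \<equiv> generate G (c ` {1..m})"

lemma a_closed: "i \<in> {1..n} \<Longrightarrow> a i \<in> carrier G"
  using malcev by (simp add: malcev_basis_def)

lemma c_central: "\<forall>j\<in>{1..m}. c j \<in> grp_center G"
  using malcev generate.incl[of _ "c ` {1..m}" G] by (auto simp: malcev_basis_def)

lemma c_closed: "\<forall>j\<in>{1..m}. c j \<in> carrier G"
  using c_central grp_center_closed by blast

lemma C_subgroup_is_subgroup: "subgroup C_subgroup G"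
  using c_closed by (intro generate_is_subgroup) auto

lemma aprod_c_in_C_subgroup: "k \<le> m \<Longrightarrow> aprod G c k g \<in> C_subgroup"
proof (induction k)
  case (Suc k)
  have "c (Suc k) \<in> C_subgroup" using Suc.prems by (auto intro: generate.incl)
  then show ?case
    using Suc c_closed subgroup_int_pow_closed[OF C_subgroup_is_subgroup]
    by (auto simp: aprod_Suc intro!: generate.eng)
qed (simp add: generate.one)

lemma C_subgroup_eq_aprod: "h \<in> C_subgroup \<Longrightarrow> \<exists>g. h = aprod G c m g"
proof (induction rule: generate.induct)
  case one
  show ?case using aprod_zero[OF c_closed] by metis
next
  case (incl h)
  then obtain j where j: "j \<in> {1..m}" "h = c j" by auto
  then have "h = aprod G c m (\<lambda>i. if i = j then 1 else 0)"
    using aprod_single[OF c_closed, of j 1] c_closed by simp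
  then show ?case by blast
next
  case (inv h)
  then obtain j where "j \<in> {1..m}" "h = c j" by auto
  then have "inv h = aprod G c m (\<lambda>i. - (if i = j then 1 else 0))"
    using aprod_uminus_central[OF c_central] aprod_single[OF c_closed, of j 1] c_closed by auto
  then show ?case by blast
next
  case (eng h1 h2)
  then show ?case using aprod_add_central[OF c_central] by metis
qed

lemma aprod_c_inj:
  assumes "aprod G c m f = aprod G c m g"
  shows "\<forall>j\<in>{1..m}. f j = g j"
proof -
  have "aprod G c m (\<lambda>j. f j + - g j) = aprod G c m f \<otimes> inv (aprod G c m g)"
    by (simp only: aprod_add_central[OF c_central] aprod_uminus_central[OF c_central])
  also have "\<dots> = \<one>"
    using assms aprod_central[OF c_central] grp_center_closed by (simp add: r_inv)
  finally have "aprod G c m (\<lambda>j. f j + - g j) = \<one>" .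
  then show ?thesis using malcev unfolding malcev_basis_def by fastforce
qed

lemma normal_form_exists: "x \<in> carrier G \<Longrightarrow> \<exists>e g. x = aprod G a n e \<otimes> aprod G c m g"
  using malcev C_subgroup_eq_aprod unfolding malcev_basis_def l_coset_def by fast

lemma normal_form_unique:
  assumes "aprod G a n e \<otimes> aprod G c m g = aprod G a n e' \<otimes> aprod G c m g'"
  shows "(\<forall>i\<in>{1..n}. e i = e' i) \<and> (\<forall>j\<in>{1..m}. g j = g' j)"
proof -
  let ?x = "aprod G a n e \<otimes> aprod G c m g"
  have A: "aprod G a n e \<in> carrier G" "aprod G a n e' \<in> carrier G"
    using a_closed aprod_closed by auto
  have "?x \<in> aprod G a n e <# C_subgroup"
    using aprod_c_in_C_subgroup[of m g] unfolding l_coset_def by auto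
  moreover have "?x \<in> aprod G a n e' <# C_subgroup"
    using assms aprod_c_in_C_subgroup[of m g'] unfolding l_coset_def by auto
  ultimately have "aprod G a n e <# C_subgroup = aprod G a n e' <# C_subgroup"
    using l_repr_independence[OF _ _ C_subgroup_is_subgroup] A by metis
  then have e: "\<forall>i\<in>{1..n}. e i = e' i"
    using malcev unfolding malcev_basis_def by blast
  then have "aprod G c m g = aprod G c m g'"
    using assms aprod_cong[OF e] A aprod_central[OF c_central] grp_center_closed by simp
  with e show ?thesis using aprod_c_inj by blast
qed

lemma alpha_coord_eq:
  assumes "x = aprod G a n e \<otimes> aprod G c m g" "i \<in> {1..n}"
  shows "alpha_coord G n m a c x i = e i"
  unfolding alpha_coord_def
  by (rule the_equality) (use assms normal_form_unique in blast)+

lemma c_part_eq: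
  assumes "x = aprod G a n e \<otimes> aprod G c m g"
  shows "c_part G n m a c x = aprod G c m g"
proof -
  have "gamma_coord G n m a c x j = g j" if "j \<in> {1..m}" for j
    unfolding gamma_coord_def
    by (rule the_equality) (use assms that normal_form_unique in blast)+
  then show ?thesis unfolding c_part_def by (intro aprod_cong) auto
qed

lemma c_part_central: "c_part G n m a c x \<in> grp_center G"
  unfolding c_part_def using aprod_central[OF c_central] .

lemma comm_basis:
  assumes "i \<in> {1..n}" "j \<in> {1..n}"
  shows "comm G (a i) (a j) = aprod G c m (\<lambda>t. lam G n m a c t i j)"
proof -
  have "comm G (a i) (a j) \<in> C_subgroup"
    using malcev comm_in_derived[OF a_closed a_closed] assms by (auto simp: malcev_basis_def)
  then obtain g where g: "comm G (a i) (a j) = aprod G c m g"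
    using C_subgroup_eq_aprod by blast
  have "lam G n m a c t i j = g t" if "t \<in> {1..m}" for t
    unfolding lam_def
  proof (rule the_equality)
    fix k assume "\<exists>g'. comm G (a i) (a j) = aprod G c m g' \<and> g' t = k"
    then obtain g' where "aprod G c m g' = aprod G c m g" "g' t = k" using g by auto
    then show "k = g t" using aprod_c_inj that by blast
  qed (use g in blast)
  then have "aprod G c m (\<lambda>t. lam G n m a c t i j) = aprod G c m g"
    by (intro aprod_cong) auto
  with g show ?thesis by (rule trans[OF _ sym])
qed

lemma lam_antisym:
  assumes "t \<in> {1..m}" "i \<in> {1..n}" "j \<in> {1..n}"
  shows "lam G n m a c t j i = - lam G n m a c t i j"
proof -
  have "aprod G c m (\<lambda>t. lam G n m a c t j i) = comm G (a j) (a i)"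
    using comm_basis[OF assms(3,2)] by simp
  also have "\<dots> = inv (comm G (a i) (a j))"
    using comm_swap[OF a_closed[OF assms(2)] a_closed[OF assms(3)]] .
  also have "\<dots> = aprod G c m (\<lambda>t. - lam G n m a c t i j)"
    using comm_basis[OF assms(2,3)] aprod_uminus_central[OF c_central] by simp
  finally have "aprod G c m (\<lambda>t. lam G n m a c t j i) = aprod G c m (\<lambda>t. - lam G n m a c t i j)" .
  then show ?thesis using aprod_c_inj assms(1) by blast
qed

lemma lam_diag:
  assumes "t \<in> {1..m}" "i \<in> {1..n}"
  shows "lam G n m a c t i i = 0"
proof -
  have "aprod G c m (\<lambda>t. lam G n m a c t i i) = comm G (a i) (a i)"
    using comm_basis[OF assms(2,2)] by simp
  also have "\<dots> = aprod G c m (\<lambda>_. 0)"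
    using a_closed[OF assms(2)] aprod_zero[OF c_closed] by simp
  finally have "aprod G c m (\<lambda>t. lam G n m a c t i i) = aprod G c m (\<lambda>_. 0)" .
  then show ?thesis using aprod_c_inj assms(1) by blast
qed

lemma comm_basis_aprod:
  assumes l: "l \<in> {1..n}" and "k \<le> n"
  shows "comm G (a l) (aprod G a k e)
    = aprod G c m (\<lambda>t. \<Sum>i\<in>{1..k}. e i * lam G n m a c t l i)"
  using \<open>k \<le> n\<close>
proof (induction k)
  case 0
  show ?case using a_closed[OF l] aprod_zero[OF c_closed] by (simp add: comm_def)
next
  case (Suc k)
  have "comm G (a l) (aprod G a (Suc k) e)
      = comm G (a l) (aprod G a k e) \<otimes> comm G (a l) (a (Suc k)) [^] e (Suc k)"
    using Suc.prems l a_closed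
    by (simp add: aprod_Suc aprod_closed comm_mult_right comm_int_pow_right)
  also have "\<dots> = aprod G c m (\<lambda>t. (\<Sum>i\<in>{1..k}. e i * lam G n m a c t l i)
      + e (Suc k) * lam G n m a c t l (Suc k))"
    using Suc l comm_basis[of l "Suc k"]
    by (simp add: aprod_int_pow_central[OF c_central] aprod_add_central[OF c_central])
  finally show ?case by simp
qed

lemma M_entry_skip_sum:
  assumes t: "t \<in> {1..m}" and l: "l \<in> {1..n}"
  shows "(\<Sum>k\<in>{1..n-1}. M_entry G n m a c l t k * e (skip l k))
    = (\<Sum>i\<in>{1..n}. lam G n m a c t l i * e i)"
proof -
  have "M_entry G n m a c l t k = lam G n m a c t l (skip l k)" if k: "k \<in> {1..n-1}" for k
  proof (cases "k < l")
    case True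
    then show ?thesis
      using lam_antisym[OF t l, of k] k l by (simp add: M_entry_def skip_def)
  qed (simp add: M_entry_def skip_def)
  then have "(\<Sum>k\<in>{1..n-1}. M_entry G n m a c l t k * e (skip l k))
      = (\<Sum>k\<in>{1..n-1}. lam G n m a c t l (skip l k) * e (skip l k))"
    by simp
  also have "\<dots> = (\<Sum>i\<in>{1..n} - {l}. lam G n m a c t l i * e i)"
    using sum.reindex_bij_betw[OF bij_betw_skip[OF l]] .
  also have "\<dots> = (\<Sum>i\<in>{1..n}. lam G n m a c t l i * e i)"
    using lam_diag[OF t l] l by (simp add: sum_diff1)
  finally show ?thesis .
qed

lemma comm_basis_eq_one_exponents:
  assumes l: "l \<in> {1..n}" and rank: "rank_M G n m a c l = n - 1"
    and comm: "comm G (a l) (aprod G a n e) = \<one>"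
  shows "\<forall>i\<in>{1..n} - {l}. e i = 0"
proof -
  have "aprod G c m (\<lambda>t. \<Sum>i\<in>{1..n}. e i * lam G n m a c t l i) = aprod G c m (\<lambda>_. 0)"
    using comm comm_basis_aprod[OF l order.refl] aprod_zero[OF c_closed] by simp
  then have "\<forall>t\<in>{1..m}. (\<Sum>i\<in>{1..n}. lam G n m a c t l i * e i) = 0"
    using aprod_c_inj by (simp add: mult.commute)
  then have "\<forall>t\<in>{1..m}. (\<Sum>k\<in>{1..n-1}. M_entry G n m a c l t k * e (skip l k)) = 0"
    using M_entry_skip_sum[OF _ l] by simp
  then have zero: "\<forall>k\<in>{1..n-1}. e (skip l k) = 0"
    using full_row_rank_kernel_trivial[of "M_entry G n m a c l" m "n - 1" "\<lambda>k. e (skip l k)"] rank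
    unfolding rank_M_def by blast
  show ?thesis
  proof
    fix i assume "i \<in> {1..n} - {l}"
    then obtain k where "k \<in> {1..n-1}" "i = skip l k"
      using bij_betw_imp_surj_on[OF bij_betw_skip[OF l]] by blast
    then show "e i = 0" using zero by simp
  qed
qed

lemma comm_basis_eq_one_iff:
  assumes l: "l \<in> {1..n}" and rank: "rank_M G n m a c l = n - 1" and x: "x \<in> carrier G"
  shows "comm G (a l) x = \<one> \<longleftrightarrow> x = a l [^] alpha_coord G n m a c x l \<otimes> c_part G n m a c x"
proof
  obtain e g where xe: "x = aprod G a n e \<otimes> aprod G c m g"
    using normal_form_exists x by blast
  assume "comm G (a l) x = \<one>"
  then have "comm G (a l) (aprod G a n e) = \<one>"
    using xe l a_closed aprod_closed aprod_central[OF c_central] grp_center_closed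
    by (simp add: comm_mult_right comm_center_right)
  then have "\<forall>i\<in>{1..n}. e i = (if i = l then e l else 0)"
    using comm_basis_eq_one_exponents[OF l rank] by auto
  then have "aprod G a n e = aprod G a n (\<lambda>i. if i = l then e l else 0)"
    by (rule aprod_cong)
  also have "\<dots> = a l [^] e l"
    using aprod_single[of n a l "e l"] a_closed l by simp
  finally have "aprod G a n e = a l [^] e l" .
  then show "x = a l [^] alpha_coord G n m a c x l \<otimes> c_part G n m a c x"
    using xe alpha_coord_eq[OF xe l] c_part_eq[OF xe] by simp
next
  assume xe: "x = a l [^] alpha_coord G n m a c x l \<otimes> c_part G n m a c x"
  show "comm G (a l) x = \<one>"
    by (subst xe) (rule comm_self_pow_mult_central[OF a_closed[OF l] c_part_central])
qed

lemma center_eq_C_subgroup: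
  assumes l: "l \<in> {1..n}" and rank: "rank_M G n m a c l = n - 1"
    and t: "t \<in> {1..m}" and k: "k \<in> {1..n}" "k \<noteq> l" and lam: "lam G n m a c t l k \<noteq> 0"
  shows "grp_center G = C_subgroup"
proof
  show "C_subgroup \<subseteq> grp_center G" using malcev by (simp add: malcev_basis_def)
next
  show "grp_center G \<subseteq> C_subgroup"
  proof
    fix z assume z: "z \<in> grp_center G"
    let ?\<alpha> = "alpha_coord G n m a c z l"
    have zc: "z \<in> carrier G" using z grp_center_closed by blast
    have ze: "z = a l [^] ?\<alpha> \<otimes> c_part G n m a c z"
      using comm_basis_eq_one_iff[OF l rank zc] comm_center_right[OF a_closed[OF l] z] by blast
    have "comm G (a k) z = comm G (a k) (a l) [^] ?\<alpha>"
      using comm_int_pow_mult_central[OF a_closed[OF k(1)] a_closed[OF l] c_part_central, of ?\<alpha> z]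
      by (simp only: ze[symmetric])
    then have "\<one> = comm G (a k) (a l) [^] ?\<alpha>"
      using comm_center_right[OF a_closed[OF k(1)] z] by simp
    then have "aprod G c m (\<lambda>t. ?\<alpha> * lam G n m a c t k l) = aprod G c m (\<lambda>_. 0)"
      using comm_basis[OF k(1) l] aprod_int_pow_central[OF c_central] aprod_zero[OF c_closed]
      by simp
    then have "?\<alpha> * lam G n m a c t k l = 0" using aprod_c_inj t by blast
    then have "?\<alpha> = 0" using lam lam_antisym[OF t l k(1)] by simp
    then have "z = c_part G n m a c z"
      using c_part_central[of z] grp_center_closed by (subst ze) simp
    then show "z \<in> C_subgroup"
      unfolding c_part_def using aprod_c_in_C_subgroup[OF order.refl] by metis
  qed
qed

lemma c_small_basis_element:
  assumes l: "l \<in> {1..n}" and rank: "rank_M G n m a c l = n - 1"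
  shows "c_small G (a l)"
  unfolding c_small_def grp_centralizer_def
proof (intro equalityI subsetI)
  fix y assume "y \<in> {y \<in> carrier G. a l \<otimes> y = y \<otimes> a l}"
  then have "y = a l [^] alpha_coord G n m a c y l \<otimes> c_part G n m a c y"
    using comm_basis_eq_one_iff[OF l rank] comm_eq_one_iff a_closed l by blast
  then show "y \<in> {a l [^] (t::int) \<otimes> z |t z. z \<in> grp_center G}"
    using c_part_central by blast
next
  fix y assume "y \<in> {a l [^] (t::int) \<otimes> z |t z. z \<in> grp_center G}"
  then obtain t z where y: "y = a l [^] (t::int) \<otimes> z" "z \<in> grp_center G" by blast
  then have "comm G (a l) y = \<one>"
    using comm_self_pow_mult_central a_closed l by simp
  then show "y \<in> {y \<in> carrier G. a l \<otimes> y = y \<otimes> a l}"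
    using y comm_eq_one_iff a_closed l grp_center_closed by auto
qed

end

theorem proposition3p7:
  fixes G (structure) and n m :: nat and a c :: "nat \<Rightarrow> 'g" and l :: nat
  assumes "group G"
    and "finitely_generated G"
    and "torsion_free G"
    and "two_step_nilpotent G"
    and "malcev_basis G n m a c"
    and "n \<ge> 2" and "m \<ge> 1"
    and "l \<in> {1..n}"
    and "rank_M G n m a c l = n - 1"
  shows "(\<forall>x \<in> carrier G. comm G (a l) x = \<one> \<longleftrightarrow>
            x = a l [^] alpha_coord G n m a c x l \<otimes> c_part G n m a c x)
       \<and> ((\<exists>t \<in> {1..m}. \<exists>k \<in> {1..n}. k \<noteq> l \<and> lam G n m a c t l k \<noteq> 0)
           \<longrightarrow> grp_center G = generate G (c ` {1..m}) \<and> c_small G (a l))"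
proof -
  interpret malcev_group G n m a c
    using assms unfolding malcev_group_def malcev_group_axioms_def class_two_group_def
      class_two_group_axioms_def two_step_nilpotent_def
    by auto
  show ?thesis
    using comm_basis_eq_one_iff center_eq_C_subgroup c_small_basis_element assms(8,9) by blast
qed

end
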